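(* Assume the two-system setup, let $x_2^s$ be a steady-state map and $(x_1^s,x_2^s(x_1^s))$ a steady state. Then the Jacobian $J$ of the vector field of the predictive-sensitivity system at $(x_1^s,x_2^s(x_1^s))$ is similar to $$\begin{bmatrix}\nabla_{x_1}f_1^r(x_1^s) & \nabla_{x_2}f_1(x_1^s,x_2^s(x_1^s))\\ 0 & \nabla_{x_2}f_2(x_1^s,x_2^s(x_1^s))\end{bmatrix}.$$
   Context: Two-system setup: Let $f_1:\mathbb{R}^{n_1}\times\mathbb{R}^{n_2}\to\mathbb{R}^{n_1}$ and $f_2:\mathbb{R}^{n_1}\times\mathbb{R}^{n_2}\to\mathbb{R}^{n_2}$ be continuously differentiable, and assume $\nabla_{x_2}f_2(x_1,x_2)$ is invertible for all $(x_1,x_2)$. Define the extended sensitivity $S_{x_1}^{x_2}(x_1,x_2):=-\nabla_{x_2}f_2(x_1,x_2)^{-1}\nabla_{x_1}f_2(x_1,x_2)\in\mathbb{R}^{n_2\times n_1}$. The predictive-sensitivity system is $$\begin{bmatrix} I&0\\ -S_{x_1}^{x_2}(x_1,x_2)&I\end{bmatrix}\begin{bmatrix}\dot x_1\\ \dot x_2\end{bmatrix}=\begin{bmatrix}f_1(x_1,x_2)\\ f_2(x_1,x_2)\end{bmatrix},$$ i.e. $\dot x_1=f_1(x_1,x_2)$, $\dot x_2=f_2(x_1,x_2)+S_{x_1}^{x_2}(x_1,x_2)f_1(x_1,x_2)$; it is assumed that this right-hand side is locally Lipschitz continuous. A steady-state map is a continuously differentiable map $x_2^s$ defined on an open set $U\subseteq\mathbb{R}^{n_1}$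 with $f_2(x_1,x_2^s(x_1))=0$ for all $x_1\in U$ (then $\nabla_{x_1}x_2^s(x_1)=S_{x_1}^{x_2}(x_1,x_2^s(x_1))$). The reduced vector field is $f_1^r(x_1):=f_1(x_1,x_2^s(x_1))$, with Jacobian $\nabla_{x_1}f_1^r(x_1)=\nabla_{x_1}f_1(x_1,x_2^s(x_1))+\nabla_{x_2}f_1(x_1,x_2^s(x_1))\nabla_{x_1}x_2^s(x_1)$. A steady state is a point $(x_1^s,x_2^s(x_1^s))$ with $f_1^r(x_1^s)=0$. *)

theory Defs
  imports "HOL-Analysis.Analysis"
begin

text \<open>Matrices are HOL-Analysis matrices: A :: real^'n^'m is an m x n matrix
(rows indexed by 'm), acting by A *v x.\<close>

definition similar_matrix :: "real^'n^'n \<Rightarrow> real^'n^'n \<Rightarrow> bool" where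
  "similar_matrix A B \<longleftrightarrow> (\<exists>P::real^'n^'n. invertible P \<and> A = matrix_inv P ** B ** P)"

definition block_matrix ::
  "real^'a^'a \<Rightarrow> real^'b^'a \<Rightarrow> real^'a^'b \<Rightarrow> real^'b^'b \<Rightarrow> real^('a + 'b)^('a + 'b)" where
  "block_matrix A B C D = (\<chi> i j. case i of
      Inl i1 \<Rightarrow> (case j of Inl j1 \<Rightarrow> A $ i1 $ j1 | Inr j2 \<Rightarrow> B $ i1 $ j2)
    | Inr i2 \<Rightarrow> (case j of Inl j1 \<Rightarrow> C $ i2 $ j1 | Inr j2 \<Rightarrow> D $ i2 $ j2))"

definition locally_lipschitz :: "('a::metric_space \<Rightarrow> 'b::metric_space) \<Rightarrow> bool" where
  "locally_lipschitz F \<longleftrightarrow> (\<forall>z. \<exists>e>0. \<exists>L. \<forall>u\<in>ball z e. \<forall>v\<in>ball z e. dist (F u) (F v) \<le> L * dist u v)"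

end

theory Submission
  imports Defs
begin

text \<open>The correction term of the predictive-sensitivity system is S(z) f1(z) with
S = -D22^(-1) D21. At a steady state f1 vanishes, so only S(z0) f1'(z0) survives in its
derivative; S only has to be continuous (matrix inversion is, by Cramer's rule), not
differentiable. Differentiating f2(x1, x2s(x1)) = 0 gives D21 + D22 \<nabla>x2s = 0, hence
S(z0) = \<nabla>x2s(x1s), and conjugating the Jacobian [[D11, D12], [D21 + S D11, D22 + S D12]]
by the shear [[I, 0], [-S, I]] yields the block-triangular matrix.\<close>

lemma matrix_mul_minus_right: "(A::'a::ring_1^'n^'m) ** (- B) = - (A ** B)"
  by (simp add: matrix_matrix_mult_def vec_eq_iff sum_negf)

lemma matrix_add_rdistrib: "((A::'a::semiring_1^'n^'m) + B) ** C = A ** C + B ** C"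
  by (vector matrix_matrix_mult_def sum.distrib[symmetric] field_simps)

lemma matrix_inv_mult_right:
  fixes A :: "'a::field^'n^'n"
  assumes "invertible A"
  shows "A ** matrix_inv A = mat 1"
  using someI_ex[OF assms[unfolded invertible_def]] by (simp add: matrix_inv_def)

lemma matrix_inv_mult_left:
  fixes A :: "'a::field^'n^'n"
  assumes "invertible A"
  shows "matrix_inv A ** A = mat 1"
  using someI_ex[OF assms[unfolded invertible_def]] by (simp add: matrix_inv_def)

lemma matrix_inv_eq_left_inverse:
  fixes A B :: "real^'n^'n"
  assumes "B ** A = mat 1"
  shows "matrix_inv A = B"
proof -
  have inv: "invertible A" using assms invertible_left_inverse by blast
  have "matrix_inv A = (B ** A) ** matrix_inv A" by (simp add: assms)
  also have "\<dots> = B" by (simp flip: matrix_mul_assoc add: matrix_inv_mult_right[OF inv])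
  finally show ?thesis .
qed

lemma eq_neg_matrix_inv_mult:
  fixes A :: "real^'m^'n" and B :: "real^'n^'n"
  assumes "invertible B" and "A + B ** Y = 0"
  shows "Y = - (matrix_inv B ** A)"
proof -
  have "B ** Y = - A" using assms(2) by (simp add: eq_neg_iff_add_eq_0 add.commute)
  then have "matrix_inv B ** (B ** Y) = matrix_inv B ** (- A)" by simp
  then show ?thesis
    by (simp add: matrix_mul_assoc matrix_inv_mult_left[OF assms(1)] matrix_mul_minus_right)
qed

lemma matrix_inv_cramer:
  fixes A :: "real^'n^'n"
  assumes "det A \<noteq> 0"
  shows "matrix_inv A = (\<chi> i j. det (\<chi> r c. if c = i then axis j 1 $ r else A $ r $ c) / det A)"
proof -
  have inv: "invertible A" using assms by (simp add: invertible_det_nz)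
  have "matrix_inv A $ i $ j = det (\<chi> r c. if c = i then axis j 1 $ r else A $ r $ c) / det A" for i j
  proof -
    have "A *v (matrix_inv A *v axis j 1) = axis j 1"
      by (simp add: matrix_vector_mul_assoc matrix_inv_mult_right[OF inv])
    then have "matrix_inv A *v axis j 1 = (\<chi> k. det (\<chi> r c. if c = k then axis j 1 $ r else A $ r $ c) / det A)"
      using cramer[OF assms] by blast
    moreover have "matrix_inv A $ i $ j = (matrix_inv A *v axis j 1) $ i"
      by (simp add: matrix_vector_mult_basis column_def)
    ultimately show ?thesis by simp
  qed
  then show ?thesis by (simp add: vec_eq_iff)
qed

lemma tendsto_det:
  fixes A :: "'b \<Rightarrow> real^'n^'n"
  assumes "(A \<longlongrightarrow> A0) F"
  shows "((\<lambda>z. det (A z)) \<longlongrightarrow> det A0) F"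
  unfolding det_def by (intro tendsto_intros assms)

lemma tendsto_matrix_inv:
  fixes A :: "'b \<Rightarrow> real^'n^'n"
  assumes lim: "(A \<longlongrightarrow> A0) F" and inv: "invertible A0"
  shows "((\<lambda>z. matrix_inv (A z)) \<longlongrightarrow> matrix_inv A0) F"
proof -
  have det0: "det A0 \<noteq> 0" using inv by (simp add: invertible_det_nz)
  have "\<forall>\<^sub>F z in F. det (A z) \<noteq> 0"
    using tendsto_det[OF lim] det0 by (rule tendsto_imp_eventually_ne)
  then have eq: "\<forall>\<^sub>F z in F. (\<chi> i j. det (\<chi> r c. if c = i then axis j 1 $ r else A z $ r $ c) / det (A z))
      = matrix_inv (A z)"
    by eventually_elim (simp add: matrix_inv_cramer)
  have "((\<lambda>z. \<chi> i j. det (\<chi> r c. if c = i then axis j 1 $ r else A z $ r $ c) / det (A z))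
      \<longlongrightarrow> matrix_inv A0) F"
    unfolding matrix_inv_cramer[OF det0]
  proof (intro tendsto_intros tendsto_det det0 lim)
    fix i j r c
    show "((\<lambda>z. if c = i then axis j 1 $ r else A z $ r $ c)
        \<longlongrightarrow> (if c = i then axis j 1 $ r else A0 $ r $ c)) F"
      by (cases "c = i") (simp_all add: tendsto_vec_nth lim)
  qed
  then show ?thesis using eq by (rule Lim_transform_eventually)
qed

lemma tendsto_matrix_mult:
  fixes A :: "'b \<Rightarrow> real^'n^'m" and B :: "'b \<Rightarrow> real^'k^'n"
  assumes "(A \<longlongrightarrow> A0) F" "(B \<longlongrightarrow> B0) F"
  shows "((\<lambda>z. A z ** B z) \<longlongrightarrow> A0 ** B0) F"
  unfolding matrix_matrix_mult_def by (intro tendsto_intros assms)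

lemma bounded_bilinear_matrix_vector_mult:
  "bounded_bilinear (\<lambda>(A::real^'n^'m) x. A *v x)"
  unfolding bilinear_conv_bounded_bilinear[symmetric] bilinear_def
  by (simp add: linear_iff matrix_vector_right_distrib matrix_vector_mult_add_rdistrib)
     (simp add: vec_eq_iff matrix_vector_mult_def sum_distrib_left ac_simps)

lemma bounded_bilinear_has_derivative_vanishing_right:
  assumes bb: "bounded_bilinear bp"
    and g: "(g \<longlongrightarrow> g x) (at x within s)"
    and f: "(f has_derivative f') (at x within s)" and fx: "f x = 0"
  shows "((\<lambda>y. bp (g y) (f y)) has_derivative (\<lambda>h. bp (g x) (f' h))) (at x within s)"
proof -
  interpret bounded_bilinear bp by (rule bb)
  obtain KF where KF: "\<And>h. norm (f' h) \<le> norm h * KF"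
    using bounded_linear.bounded[OF has_derivative_bounded_linear[OF f]] by fast
  obtain K where K: "0 < K" and norm_prod: "\<And>a b. norm (bp a b) \<le> norm a * norm b * K"
    using pos_bounded by fast
  define Nf where "Nf y = norm (f y - f x - f' (y - x)) / norm (y - x)" for y
  let ?H = "\<lambda>y. norm (g x) * Nf y * K + norm (g y - g x) * (Nf y + KF) * K"
  show ?thesis
  proof (rule has_derivativeI_sandwich[of 1])
    show "bounded_linear (\<lambda>h. bp (g x) (f' h))"
      by (rule bounded_linear_compose[OF bounded_linear_right has_derivative_bounded_linear[OF f]])
  next
    fix y assume "y \<noteq> x"
    then have ny: "norm (y - x) > 0" by simp
    have "norm (f y) \<le> norm (f y - f x - f' (y - x)) + norm (f' (y - x))"
      using norm_triangle_ineq[of "f y - f x - f' (y - x)" "f' (y - x)"] fx by simp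
    also have "\<dots> \<le> (Nf y + KF) * norm (y - x)"
      using KF[of "y - x"] ny by (simp add: Nf_def field_simps)
    finally have fy: "norm (f y) \<le> (Nf y + KF) * norm (y - x)" .
    have "bp (g y) (f y) - bp (g x) (f x) - bp (g x) (f' (y - x))
        = bp (g x) (f y - f x - f' (y - x)) + bp (g y - g x) (f y)"
      using fx by (simp add: diff_left diff_right zero_right)
    then have "norm (bp (g y) (f y) - bp (g x) (f x) - bp (g x) (f' (y - x)))
        \<le> norm (bp (g x) (f y - f x - f' (y - x))) + norm (bp (g y - g x) (f y))"
      by (simp only: norm_triangle_ineq)
    also have "\<dots> \<le> norm (g x) * norm (f y - f x - f' (y - x)) * K + norm (g y - g x) * norm (f y) * K"
      by (intro add_mono norm_prod)
    also have "\<dots> = norm (g x) * Nf y * K * norm (y - x) + norm (g y - g x) * norm (f y) * K"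
      using ny by (simp add: Nf_def)
    also have "\<dots> \<le> norm (g x) * Nf y * K * norm (y - x) + norm (g y - g x) * ((Nf y + KF) * norm (y - x)) * K"
      using fy K by (intro add_left_mono mult_right_mono mult_left_mono) auto
    also have "\<dots> = ?H y * norm (y - x)"
      by (simp add: algebra_simps)
    finally show "norm (bp (g y) (f y) - bp (g x) (f x) - bp (g x) (f' (y - x))) / norm (y - x) \<le> ?H y"
      using ny by (simp add: divide_le_eq)
  next
    have "(Nf \<longlongrightarrow> 0) (at x within s)"
      using f unfolding has_derivative_iff_norm Nf_def[abs_def] by blast
    then have "(?H \<longlongrightarrow> norm (g x) * 0 * K + norm (g x - g x) * (0 + KF) * K) (at x within s)"
      by (intro tendsto_intros g)
    then show "(?H \<longlongrightarrow> 0) (at x within s)" by simp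
  qed simp
qed

lemma sum_UNIV_Plus:
  "(\<Sum>k\<in>UNIV. g k) = (\<Sum>k\<in>UNIV. g (Inl k)) + (\<Sum>k\<in>UNIV. g (Inr k))"
  for g :: "'a::finite + 'b::finite \<Rightarrow> 'c::comm_monoid_add"
  by (simp flip: UNIV_Plus_UNIV add: sum.Plus)

lemma block_matrix_mult:
  "block_matrix A B C D ** block_matrix E F G H =
   block_matrix (A ** E + B ** G) (A ** F + B ** H) (C ** E + D ** G) (C ** F + D ** H)"
  unfolding matrix_matrix_mult_def block_matrix_def
  by (simp add: vec_eq_iff sum_UNIV_Plus split: sum.split)

lemma block_matrix_mat_1: "block_matrix (mat 1) 0 0 (mat 1) = mat 1"
  unfolding mat_def block_matrix_def by (simp add: vec_eq_iff split: sum.split)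

lemma similar_block_matrix_triangular:
  fixes A :: "real^'a^'a" and B :: "real^'b^'a" and C :: "real^'a^'b" and D :: "real^'b^'b"
  assumes "C + D ** S = 0"
  shows "similar_matrix (block_matrix A B (C + S ** A) (D + S ** B))
                        (block_matrix (A + B ** S) B 0 D)"
proof -
  define Q where "Q = block_matrix (mat 1) 0 (- S) (mat 1)"
  have left_inverse: "block_matrix (mat 1) 0 S (mat 1) ** Q = mat 1"
    by (simp add: Q_def block_matrix_mult block_matrix_mat_1 matrix_mul_minus_right)
  have "D ** S = - C" using assms by (simp add: eq_neg_iff_add_eq_0 add.commute)
  then have "block_matrix (A + B ** S) B 0 D ** Q = block_matrix A B C D"
    by (simp add: Q_def block_matrix_mult matrix_mul_minus_right matrix_add_rdistrib)
  then have "matrix_inv Q ** block_matrix (A + B ** S) B 0 D ** Q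
      = block_matrix (mat 1) 0 S (mat 1) ** block_matrix A B C D"
    by (simp flip: matrix_mul_assoc add: matrix_inv_eq_left_inverse[OF left_inverse])
  also have "\<dots> = block_matrix A B (C + S ** A) (D + S ** B)"
    by (simp add: block_matrix_mult add.commute)
  finally have "block_matrix A B (C + S ** A) (D + S ** B)
      = matrix_inv Q ** block_matrix (A + B ** S) B 0 D ** Q" ..
  moreover have "invertible Q"
    using left_inverse invertible_left_inverse by blast
  ultimately show ?thesis unfolding similar_matrix_def by blast
qed

lemma steady_state_sensitivity_relation:
  fixes f :: "(real^'a) \<times> (real^'b) \<Rightarrow> real^'c" and y :: "real^'a \<Rightarrow> real^'b"
  assumes f: "(f has_derivative (\<lambda>(h1, h2). A *v h1 + B *v h2)) (at (x, y x))"
    and y: "(y has_derivative (\<lambda>h. Y *v h)) (at x)"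
    and U: "open U" "x \<in> U" and steady: "\<And>u. u \<in> U \<Longrightarrow> f (u, y u) = 0"
  shows "A + B ** Y = 0"
proof -
  have "((\<lambda>u. (u, y u)) has_derivative (\<lambda>h. (h, Y *v h))) (at x)"
    by (rule has_derivative_Pair[OF has_derivative_ident y])
  from has_derivative_compose[OF this f]
  have "((\<lambda>u. f (u, y u)) has_derivative (\<lambda>h. A *v h + B *v (Y *v h))) (at x)"
    by simp
  moreover have "((\<lambda>u. f (u, y u)) has_derivative (\<lambda>h. 0)) (at x)"
    by (rule has_derivative_transform_within_open[OF has_derivative_const U]) (simp add: steady)
  ultimately have "(\<lambda>h. A *v h + B *v (Y *v h)) = (\<lambda>h. 0)"
    by (rule has_derivative_unique)
  then show ?thesis
    unfolding matrix_eq by (simp add: fun_eq_iff matrix_vector_mult_add_rdistrib matrix_vector_mul_assoc)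
qed

theorem proposition2:
  fixes f1 :: "(real^'n1) \<times> (real^'n2) \<Rightarrow> real^'n1"
    and f2 :: "(real^'n1) \<times> (real^'n2) \<Rightarrow> real^'n2"
    and D11 :: "(real^'n1) \<times> (real^'n2) \<Rightarrow> real^'n1^'n1"  \<comment> \<open>\<nabla>_{x1} f1\<close>
    and D12 :: "(real^'n1) \<times> (real^'n2) \<Rightarrow> real^'n2^'n1"  \<comment> \<open>\<nabla>_{x2} f1\<close>
    and D21 :: "(real^'n1) \<times> (real^'n2) \<Rightarrow> real^'n1^'n2"  \<comment> \<open>\<nabla>_{x1} f2\<close>
    and D22 :: "(real^'n1) \<times> (real^'n2) \<Rightarrow> real^'n2^'n2"  \<comment> \<open>\<nabla>_{x2} f2\<close>
    and U :: "(real^'n1) set"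
    and x2s :: "real^'n1 \<Rightarrow> real^'n2"
    and X :: "real^'n1 \<Rightarrow> real^'n1^'n2"  \<comment> \<open>\<nabla>_{x1} x2s\<close>
    and x1s :: "real^'n1"
  defines "F \<equiv> (\<lambda>z. (f1 z, f2 z + (- (matrix_inv (D22 z) ** D21 z)) *v f1 z))"
  assumes f1_deriv: "\<And>z. (f1 has_derivative (\<lambda>(h1, h2). D11 z *v h1 + D12 z *v h2)) (at z)"
    and f2_deriv: "\<And>z. (f2 has_derivative (\<lambda>(h1, h2). D21 z *v h1 + D22 z *v h2)) (at z)"
    and D_cont: "continuous_on UNIV D11" "continuous_on UNIV D12"
                "continuous_on UNIV D21" "continuous_on UNIV D22"
    and D22_inv: "\<And>z. invertible (D22 z)"
    and F_lip: "locally_lipschitz F"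
    and U_open: "open U"
    and x2s_deriv: "\<And>x1. x1 \<in> U \<Longrightarrow> (x2s has_derivative (\<lambda>h. X x1 *v h)) (at x1)"
    and X_cont: "continuous_on U X"
    and x2s_steady: "\<And>x1. x1 \<in> U \<Longrightarrow> f2 (x1, x2s x1) = 0"
    and x1s_in: "x1s \<in> U"
    and steady: "f1 (x1s, x2s x1s) = 0"
  shows "\<exists>J11 J12 J21 J22.
           (F has_derivative (\<lambda>(h1, h2). (J11 *v h1 + J12 *v h2, J21 *v h1 + J22 *v h2)))
             (at (x1s, x2s x1s))
         \<and> similar_matrix (block_matrix J11 J12 J21 J22)
             (block_matrix (D11 (x1s, x2s x1s) + D12 (x1s, x2s x1s) ** X x1s)
                           (D12 (x1s, x2s x1s)) 0 (D22 (x1s, x2s x1s)))"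
proof -
  define z0 where "z0 = (x1s, x2s x1s)"
  define S where "S z = - (matrix_inv (D22 z) ** D21 z)" for z
  have sensitivity: "D21 z0 + D22 z0 ** X x1s = 0"
    unfolding z0_def
    by (rule steady_state_sensitivity_relation[OF f2_deriv x2s_deriv[OF x1s_in] U_open x1s_in x2s_steady])
  then have X_eq: "X x1s = S z0"
    unfolding S_def by (rule eq_neg_matrix_inv_mult[OF D22_inv])
  have tendsto_at_z0: "(D \<longlongrightarrow> D z0) (at z0)" if "continuous_on UNIV D" for D :: "_ \<Rightarrow> real^'c^'d"
    using that continuous_on_eq_continuous_at[OF open_UNIV] unfolding isCont_def by blast
  have "(S \<longlongrightarrow> S z0) (at z0)"
    unfolding S_def
    by (intro tendsto_minus tendsto_matrix_mult tendsto_matrix_inv D22_inv tendsto_at_z0 D_cont(3,4))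
  from bounded_bilinear_has_derivative_vanishing_right
    [OF bounded_bilinear_matrix_vector_mult this f1_deriv]
  have "((\<lambda>z. S z *v f1 z) has_derivative
      (\<lambda>(h1, h2). X x1s *v (D11 z0 *v h1 + D12 z0 *v h2))) (at z0)"
    by (simp add: z0_def X_eq steady case_prod_beta')
  from has_derivative_Pair[OF f1_deriv has_derivative_add[OF f2_deriv this]]
  have "(F has_derivative (\<lambda>(h1, h2). (D11 z0 *v h1 + D12 z0 *v h2,
      (D21 z0 + X x1s ** D11 z0) *v h1 + (D22 z0 + X x1s ** D12 z0) *v h2))) (at z0)"
    unfolding F_def S_def
    by (rule has_derivative_eq_rhs)
       (auto simp: fun_eq_iff matrix_vector_mult_add_rdistrib matrix_vector_right_distrib
         matrix_vector_mul_assoc)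
  moreover have "similar_matrix
      (block_matrix (D11 z0) (D12 z0) (D21 z0 + X x1s ** D11 z0) (D22 z0 + X x1s ** D12 z0))
      (block_matrix (D11 z0 + D12 z0 ** X x1s) (D12 z0) 0 (D22 z0))"
    using sensitivity by (rule similar_block_matrix_triangular)
  ultimately show ?thesis
    unfolding z0_def by blast
qed

end
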